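(* Every sawed tree $F$ of height $n$ validates $\mathbf{PL}_n$.
   Context: A finite tree is a finite rooted poset in which each $\downarrow x$ is a chain; $\mathrm{Top}(T)$ is its set of maximal elements. Let $T$ be a finite tree of height $>0$ all of whose top elements have the same height, with a plane ordering $\prec$ of $\mathrm{Top}(T)$ (a linear order such that each $\uparrow x\cap\mathrm{Top}(T)$ is a $\prec$-interval); enumerate $\mathrm{Top}(T)=\{t_1\prec\cdots\prec t_k\}$. The sawed tree based on $(T,\prec)$ is $T$ together with new elements $s_1,\dots,s_{k-1}$ with $t_i<s_i$ and $t_{i+1}<s_i$ (closed under transitivity). The height of a poset is the maximum of $|C|-1$ over chains $C$. For a finite rooted poset $Q$, $\chi(Q)$ is its Jankov–Fine formula: a frame validates $\chi(Q)$ iff it has no surjective p-morphism (map with $f(\uparrow x)=\uparrow f(x)$) from an upset of it onto $Q$. $\mathbf{BD}_n$ is the logic of all finite frames of height at most $n$. The 3-fork is $\{r,a,b,c\}$ with $r<a,r<b,r<c$ only; the Scott frame is $\{r,u_1,u_2,v\}$ with $r<u_1<u_2$, $r<v$ (and $r<u_2$) only. $\mathbf{PL}_n$ is the smallest intermediate logic containing $\mathbf{BD}_n$, $\chi(\text{3-fork})$ and $\chi(\text{Scott frame})$. *)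

theory Defs
  imports Main
begin

datatype 'v fm = Var 'v | Bot | Conj "'v fm" "'v fm" | Disj "'v fm" "'v fm" | Imp "'v fm" "'v fm"

definition Top :: "'v fm" where "Top = Imp Bot Bot"
definition Neg :: "'v fm \<Rightarrow> 'v fm" where "Neg \<phi> = Imp \<phi> Bot"
definition Iff :: "'v fm \<Rightarrow> 'v fm \<Rightarrow> 'v fm" where "Iff \<phi> \<psi> = Conj (Imp \<phi> \<psi>) (Imp \<psi> \<phi>)"

definition Conjs :: "'v fm list \<Rightarrow> 'v fm" where "Conjs xs = foldr Conj xs Top"

text \<open>Conjunction of a finite set of formulas (order of conjuncts irrelevant up to equivalence).\<close>
definition ConjSet :: "'v fm set \<Rightarrow> 'v fm" where "ConjSet S = Conjs (SOME xs. set xs = S)"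

primrec subst :: "('v \<Rightarrow> 'w fm) \<Rightarrow> 'v fm \<Rightarrow> 'w fm" where
  "subst \<sigma> (Var p) = \<sigma> p"
| "subst \<sigma> Bot = Bot"
| "subst \<sigma> (Conj \<phi> \<psi>) = Conj (subst \<sigma> \<phi>) (subst \<sigma> \<psi>)"
| "subst \<sigma> (Disj \<phi> \<psi>) = Disj (subst \<sigma> \<phi>) (subst \<sigma> \<psi>)"
| "subst \<sigma> (Imp \<phi> \<psi>) = Imp (subst \<sigma> \<phi>) (subst \<sigma> \<psi>)"

definition porder :: "'w set \<Rightarrow> ('w \<Rightarrow> 'w \<Rightarrow> bool) \<Rightarrow> bool" where
  "porder W R \<longleftrightarrow> (\<forall>x\<in>W. R x x) \<and> (\<forall>x\<in>W. \<forall>y\<in>W. R x y \<and> R y x \<longrightarrow> x = y)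
     \<and> (\<forall>x\<in>W. \<forall>y\<in>W. \<forall>z\<in>W. R x y \<and> R y z \<longrightarrow> R x z)"

definition is_upset :: "'w set \<Rightarrow> ('w \<Rightarrow> 'w \<Rightarrow> bool) \<Rightarrow> 'w set \<Rightarrow> bool" where
  "is_upset W R U \<longleftrightarrow> U \<subseteq> W \<and> (\<forall>x\<in>U. \<forall>y\<in>W. R x y \<longrightarrow> y \<in> U)"

fun forces :: "'w set \<Rightarrow> ('w \<Rightarrow> 'w \<Rightarrow> bool) \<Rightarrow> ('v \<Rightarrow> 'w set) \<Rightarrow> 'w \<Rightarrow> 'v fm \<Rightarrow> bool" where
  "forces W R V w (Var p) = (w \<in> V p)"
| "forces W R V w Bot = False"
| "forces W R V w (Conj \<phi> \<psi>) = (forces W R V w \<phi> \<and> forces W R V w \<psi>)"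
| "forces W R V w (Disj \<phi> \<psi>) = (forces W R V w \<phi> \<or> forces W R V w \<psi>)"
| "forces W R V w (Imp \<phi> \<psi>) =
     (\<forall>v\<in>W. R w v \<longrightarrow> forces W R V v \<phi> \<longrightarrow> forces W R V v \<psi>)"

definition valid :: "'w set \<Rightarrow> ('w \<Rightarrow> 'w \<Rightarrow> bool) \<Rightarrow> 'v fm \<Rightarrow> bool" where
  "valid W R \<phi> \<longleftrightarrow> (\<forall>V. (\<forall>p. is_upset W R (V p)) \<longrightarrow> (\<forall>w\<in>W. forces W R V w \<phi>))"

definition chain_in :: "'w set \<Rightarrow> ('w \<Rightarrow> 'w \<Rightarrow> bool) \<Rightarrow> 'w set \<Rightarrow> bool" where
  "chain_in W R C \<longleftrightarrow> C \<subseteq> W \<and> (\<forall>x\<in>C. \<forall>y\<in>C. R x y \<or> R y x)"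

definition height_le :: "'w set \<Rightarrow> ('w \<Rightarrow> 'w \<Rightarrow> bool) \<Rightarrow> nat \<Rightarrow> bool" where
  "height_le W R n \<longleftrightarrow> (\<forall>C. chain_in W R C \<longrightarrow> finite C \<and> card C \<le> Suc n)"

definition has_height :: "'w set \<Rightarrow> ('w \<Rightarrow> 'w \<Rightarrow> bool) \<Rightarrow> nat \<Rightarrow> bool" where
  "has_height W R n \<longleftrightarrow> height_le W R n \<and> (\<exists>C. chain_in W R C \<and> finite C \<and> card C = Suc n)"

definition up_imp :: "'w set \<Rightarrow> ('w \<Rightarrow> 'w \<Rightarrow> bool) \<Rightarrow> 'w set \<Rightarrow> 'w set \<Rightarrow> 'w set" where
  "up_imp W R a b = {x\<in>W. \<forall>y\<in>W. R x y \<and> y \<in> a \<longrightarrow> y \<in> b}"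

text \<open>Jankov formula of the finite rooted poset Q = (W,R) with root r, built from the
  finite subdirectly irreducible Heyting algebra A = Up(Q) of its upsets, with one
  variable p_a (here: Var a) for each a in A, and second-largest element s = W - {r}.\<close>
definition jankov :: "'w set \<Rightarrow> ('w \<Rightarrow> 'w \<Rightarrow> bool) \<Rightarrow> 'w \<Rightarrow> 'w set fm" where
  "jankov W R r =
    (let A = {U. is_upset W R U};
         \<Gamma> = {Iff (Var (a \<inter> b)) (Conj (Var a) (Var b)) | a b. a \<in> A \<and> b \<in> A}
           \<union> {Iff (Var (a \<union> b)) (Disj (Var a) (Var b)) | a b. a \<in> A \<and> b \<in> A}
           \<union> {Iff (Var (up_imp W R a b)) (Imp (Var a) (Var b)) | a b. a \<in> A \<and> b \<in> A}
           \<union> {Iff (Var (up_imp W R a {})) (Neg (Var a)) | a. a \<in> A}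
     in Imp (ConjSet \<Gamma>) (Var (W - {r})))"

definition fork3_W :: "nat set" where "fork3_W = {0,1,2,3}"
definition fork3_le :: "nat \<Rightarrow> nat \<Rightarrow> bool" where "fork3_le x y \<longleftrightarrow> x = y \<or> x = 0"

text \<open>Scott frame: r=0, u1=1, u2=2, v=3 with r<u1<u2, r<v.\<close>
definition scott_W :: "nat set" where "scott_W = {0,1,2,3}"
definition scott_le :: "nat \<Rightarrow> nat \<Rightarrow> bool" where
  "scott_le x y \<longleftrightarrow> x = y \<or> x = 0 \<or> (x = 1 \<and> y = 2)"

definition chi_fork :: "nat set fm" where "chi_fork = jankov fork3_W fork3_le 0"
definition chi_scott :: "nat set fm" where "chi_scott = jankov scott_W scott_le 0"

text \<open>Logic of all finite frames of height at most n (finite frames represented on nat,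
  which covers all finite frames up to isomorphism).\<close>
definition BD :: "nat \<Rightarrow> nat fm set" where
  "BD n = {\<phi>. \<forall>(W::nat set) R. finite W \<and> porder W R \<and> height_le W R n \<longrightarrow> valid W R \<phi>}"

text \<open>Smallest set containing BD_n (which already contains IPC) and chi(3-fork), chi(Scott),
  closed under modus ponens and uniform substitution.\<close>
inductive_set PL :: "nat \<Rightarrow> nat fm set" for n :: nat where
  bd: "\<phi> \<in> BD n \<Longrightarrow> \<phi> \<in> PL n"
| fork: "subst \<sigma> chi_fork \<in> PL n"
| scott: "subst \<sigma> chi_scott \<in> PL n"
| mp: "\<phi> \<in> PL n \<Longrightarrow> Imp \<phi> \<psi> \<in> PL n \<Longrightarrow> \<psi> \<in> PL n"
| sub: "\<phi> \<in> PL n \<Longrightarrow> subst \<tau> \<phi> \<in> PL n"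

definition down :: "'a set \<Rightarrow> ('a \<Rightarrow> 'a \<Rightarrow> bool) \<Rightarrow> 'a \<Rightarrow> 'a set" where
  "down W R x = {y\<in>W. R y x}"

definition is_tree :: "'a set \<Rightarrow> ('a \<Rightarrow> 'a \<Rightarrow> bool) \<Rightarrow> bool" where
  "is_tree W R \<longleftrightarrow> finite W \<and> porder W R \<and> (\<exists>r\<in>W. \<forall>x\<in>W. R r x)
     \<and> (\<forall>x\<in>W. chain_in W R (down W R x))"

definition Top_el :: "'a set \<Rightarrow> ('a \<Rightarrow> 'a \<Rightarrow> bool) \<Rightarrow> 'a set" where
  "Top_el W R = {x\<in>W. \<forall>y\<in>W. R x y \<longrightarrow> y = x}"

definition plane_order :: "'a set \<Rightarrow> ('a \<Rightarrow> 'a \<Rightarrow> bool) \<Rightarrow> ('a \<Rightarrow> 'a \<Rightarrow> bool) \<Rightarrow> bool" where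
  "plane_order W R prec \<longleftrightarrow>
     (\<forall>x\<in>Top_el W R. \<not> prec x x)
   \<and> (\<forall>x\<in>Top_el W R. \<forall>y\<in>Top_el W R. \<forall>z\<in>Top_el W R. prec x y \<and> prec y z \<longrightarrow> prec x z)
   \<and> (\<forall>x\<in>Top_el W R. \<forall>y\<in>Top_el W R. x \<noteq> y \<longrightarrow> prec x y \<or> prec y x)
   \<and> (\<forall>x\<in>W. \<forall>a\<in>Top_el W R. \<forall>b\<in>Top_el W R. \<forall>c\<in>Top_el W R.
        prec a b \<and> prec b c \<and> R x a \<and> R x c \<longrightarrow> R x b)"

text \<open>Sawed tree: elements Inl x (x in T) and Inr i (the new point s_i, 1 \<le> i \<le> k-1),
  with t_i, t_(i+1) < s_i; this is the reflexive-transitive closure.\<close>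
definition saw_W :: "'a set \<Rightarrow> nat \<Rightarrow> ('a + nat) set" where
  "saw_W W k = Inl ` W \<union> Inr ` {1..<k}"

fun saw_le :: "('a \<Rightarrow> 'a \<Rightarrow> bool) \<Rightarrow> (nat \<Rightarrow> 'a) \<Rightarrow> ('a + nat) \<Rightarrow> ('a + nat) \<Rightarrow> bool" where
  "saw_le R t (Inl x) (Inl y) = R x y"
| "saw_le R t (Inl x) (Inr i) = (R x (t i) \<or> R x (t (Suc i)))"
| "saw_le R t (Inr i) (Inr j) = (i = j)"
| "saw_le R t (Inr i) (Inl y) = False"

end

theory Submission
  imports Defs
begin

(* A valuation refuting the Jankov formula of a finite rooted poset Q at some point yields,
   above that point, a p-morphism of an upset onto Q (Jankov--Fine). So it suffices to show that
   no upset of a sawed tree maps p-morphically onto the 3-fork or the Scott frame. Both have the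
   root with at least two branches, and neither consists of the root and at most two maximal points.
   In a sawed tree a top t_j sees only itself and the saw points s_(j-1), s_j, which are maximal, so
   no top above the generating point x can map to the root. Hence all points above a top lie in
   one branch; neighbouring tops share a saw point, and by planarity the tops above x form an
   interval, so all of them, and therefore every point above x not sent to the root, lie in one
   and the same branch, contradicting surjectivity. Together with the validity of BD_n on frames
   of height n this gives validity of PL_n. *)

section \<open>Finite posets and Kripke semantics\<close>

lemma porder_refl: "porder W R \<Longrightarrow> x \<in> W \<Longrightarrow> R x x"
  unfolding porder_def by blast

lemma porder_antisym: "porder W R \<Longrightarrow> x \<in> W \<Longrightarrow> y \<in> W \<Longrightarrow> R x y \<Longrightarrow> R y x \<Longrightarrow> x = y"
  unfolding porder_def by blast

lemma porder_trans:
  "porder W R \<Longrightarrow> x \<in> W \<Longrightarrow> y \<in> W \<Longrightarrow> z \<in> W \<Longrightarrow> R x y \<Longrightarrow> R y z \<Longrightarrow> R x z"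
  unfolding porder_def by blast

lemma porder_subset: "porder W R \<Longrightarrow> X \<subseteq> W \<Longrightarrow> porder X R"
  unfolding porder_def by blast

lemma porder_converse: "porder W R \<Longrightarrow> porder W (\<lambda>x y. R y x)"
  unfolding porder_def by blast

lemma porder_has_minimal:
  assumes po: "porder X R" and fin: "finite X" and x: "x \<in> X"
  shows "\<exists>m\<in>X. R m x \<and> (\<forall>y\<in>X. R y m \<longrightarrow> y = m)"
proof -
  let ?below = "\<lambda>y. {z\<in>X. R z y}"
  obtain m where m: "m \<in> X" "R m x"
    and least: "\<And>y. y \<in> X \<Longrightarrow> R y x \<Longrightarrow> card (?below m) \<le> card (?below y)"
    using ex_has_least_nat[of "\<lambda>y. y \<in> X \<and> R y x" x "\<lambda>y. card (?below y)"]
      x porder_refl[OF po x] by blast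
  have "y = m" if y: "y \<in> X" "R y m" for y
  proof (rule ccontr)
    assume "y \<noteq> m"
    then have "?below y \<subset> ?below m"
      using porder_trans[OF po _ y(1) m(1) _ y(2)] porder_antisym[OF po m(1) y(1)]
        porder_refl[OF po m(1)] y m(1) by blast
    then have "card (?below y) < card (?below m)"
      using fin by (simp add: psubset_card_mono)
    moreover have "R y x" using porder_trans[OF po y(1) m(1) x y(2) m(2)] .
    ultimately show False using least[OF y(1)] by simp
  qed
  then show ?thesis using m by blast
qed

lemma finite_porder_ex_Top_el:
  assumes "finite W" "porder W R" "y \<in> W"
  shows "\<exists>m\<in>Top_el W R. R y m"
  using porder_has_minimal[OF porder_converse[OF assms(2)] assms(1,3)]
  unfolding Top_el_def by blast

lemma forces_mono:
  assumes po: "porder W R" and up: "\<forall>p. is_upset W R (V p)"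
  shows "w \<in> W \<Longrightarrow> v \<in> W \<Longrightarrow> R w v \<Longrightarrow> forces W R V w \<phi> \<Longrightarrow> forces W R V v \<phi>"
proof (induction \<phi> arbitrary: w v)
  case (Var p) then show ?case using up unfolding is_upset_def by auto
next
  case (Imp \<phi> \<psi>)
  then show ?case using porder_trans[OF po, of w v] by simp
qed auto

lemma forces_Conjs: "forces W R V w (Conjs xs) \<longleftrightarrow> (\<forall>\<psi>\<in>set xs. forces W R V w \<psi>)"
  by (induction xs) (auto simp: Conjs_def Top_def)

lemma forces_ConjSet:
  assumes "finite S"
  shows "forces W R V w (ConjSet S) \<longleftrightarrow> (\<forall>\<psi>\<in>S. forces W R V w \<psi>)"
proof -
  have "set (SOME xs. set xs = S) = S" using someI_ex[OF finite_list[OF assms]] .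
  then show ?thesis unfolding ConjSet_def forces_Conjs by simp
qed

lemma forces_Iff_refl:
  "R y y \<Longrightarrow> y \<in> W \<Longrightarrow> forces W R V y (Iff \<phi> \<psi>) \<Longrightarrow> forces W R V y \<phi> = forces W R V y \<psi>"
  unfolding Iff_def by auto

lemma forces_subst:
  "w \<in> W \<Longrightarrow> forces W R V w (subst \<sigma> \<phi>) \<longleftrightarrow> forces W R (\<lambda>p. {v\<in>W. forces W R V v (\<sigma> p)}) w \<phi>"
  by (induction \<phi> arbitrary: w) auto

lemma validD: "valid W R \<phi> \<Longrightarrow> \<forall>p. is_upset W R (V p) \<Longrightarrow> w \<in> W \<Longrightarrow> forces W R V w \<phi>"
  unfolding valid_def by blast

lemma valid_subst:
  fixes \<sigma> :: "'v \<Rightarrow> 'u fm"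
  assumes po: "porder W R" and "valid W R \<phi>"
  shows "valid W R (subst \<sigma> \<phi>)"
  unfolding valid_def
proof (intro allI impI ballI)
  fix V :: "'u \<Rightarrow> _" and w assume up: "\<forall>p. is_upset W R (V p)" and w: "w \<in> W"
  have "\<forall>p. is_upset W R {v\<in>W. forces W R V v (\<sigma> p)}"
    using forces_mono[OF po up] unfolding is_upset_def by blast
  then have "forces W R (\<lambda>p. {v\<in>W. forces W R V v (\<sigma> p)}) w \<phi>"
    using w by (rule validD[OF assms(2)])
  then show "forces W R V w (subst \<sigma> \<phi>)" using forces_subst[OF w] by blast
qed

lemma valid_mp:
  fixes \<phi> :: "'v fm"
  assumes po: "porder W R" and "valid W R \<phi>" "valid W R (Imp \<phi> \<psi>)"
  shows "valid W R \<psi>"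
  unfolding valid_def
proof (intro allI impI ballI)
  fix V :: "'v \<Rightarrow> _" and w assume "\<forall>p. is_upset W R (V p)" "w \<in> W"
  then have "forces W R V w \<phi>" "forces W R V w (Imp \<phi> \<psi>)"
    using validD[OF assms(2)] validD[OF assms(3)] by blast+
  then show "forces W R V w \<psi>" using porder_refl[OF po \<open>w \<in> W\<close>] \<open>w \<in> W\<close> by simp
qed

lemma forces_pullback:
  assumes h: "bij_betw h W' W" and i: "i \<in> W'"
  shows "forces W' (\<lambda>i j. R (h i) (h j)) (\<lambda>p. {i\<in>W'. h i \<in> V p}) i \<phi> \<longleftrightarrow> forces W R V (h i) \<phi>"
  using i
proof (induction \<phi> arbitrary: i)
  case (Imp \<phi> \<psi>)
  have "W = h ` W'" using h by (simp add: bij_betw_def)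
  then show ?case using Imp.IH by simp
qed auto

lemma valid_pullback:
  fixes \<phi> :: "'v fm"
  assumes h: "bij_betw h W' W" and "valid W' (\<lambda>i j. R (h i) (h j)) \<phi>"
  shows "valid W R \<phi>"
  unfolding valid_def
proof (intro allI impI ballI)
  fix V :: "'v \<Rightarrow> _" and w assume up: "\<forall>p. is_upset W R (V p)" and w: "w \<in> W"
  obtain i where i: "i \<in> W'" "w = h i" using h w by (auto simp: bij_betw_def)
  have "\<forall>p. is_upset W' (\<lambda>i j. R (h i) (h j)) {i\<in>W'. h i \<in> V p}"
    using up h unfolding is_upset_def bij_betw_def by blast
  then have "forces W' (\<lambda>i j. R (h i) (h j)) (\<lambda>p. {i\<in>W'. h i \<in> V p}) i \<phi>"
    using i(1) by (rule validD[OF assms(2)])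
  then show "forces W R V w \<phi>" using forces_pullback[OF h i(1)] i(2) by blast
qed

lemma porder_pullback:
  assumes "inj_on h W'" "h ` W' \<subseteq> W" and "porder W R"
  shows "porder W' (\<lambda>i j. R (h i) (h j))"
proof -
  have "\<forall>i\<in>W'. h i \<in> W" using assms(2) by blast
  then show ?thesis using assms(1,3) unfolding porder_def inj_on_def by blast
qed

lemma height_le_pullback:
  assumes h: "inj_on h W'" "h ` W' \<subseteq> W" and fin: "finite W'" and "height_le W R n"
  shows "height_le W' (\<lambda>i j. R (h i) (h j)) n"
  unfolding height_le_def
proof (intro allI impI)
  fix C assume C: "chain_in W' (\<lambda>i j. R (h i) (h j)) C"
  then have "chain_in W R (h ` C)" using h(2) unfolding chain_in_def by blast
  moreover have "card (h ` C) = card C"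
    using C h(1) card_image inj_on_subset unfolding chain_in_def by blast
  ultimately show "finite C \<and> card C \<le> Suc n"
    using assms(4) fin C finite_subset unfolding chain_in_def height_le_def by metis
qed

lemma BD_valid:
  fixes W :: "'w set"
  assumes fin: "finite W" and po: "porder W R" and "height_le W R n" and "\<phi> \<in> BD n"
  shows "valid W R \<phi>"
proof -
  obtain h where h: "bij_betw h {0..<card W} W" using ex_bij_betw_nat_finite[OF fin] by blast
  let ?R = "\<lambda>i j. R (h i) (h j)"
  have inj: "inj_on h {0..<card W}" and into: "h ` {0..<card W} \<subseteq> W"
    using h unfolding bij_betw_def by auto
  have "porder {0..<card W} ?R" "height_le {0..<card W} ?R n"
    using porder_pullback[OF inj into po] height_le_pullback[OF inj into _ assms(3)] by auto
  then show ?thesis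
    using valid_pullback[OF h] assms(4) unfolding BD_def by blast
qed

lemma PL_valid:
  assumes fin: "finite W" and po: "porder W R" and height: "height_le W R n"
    and fork: "valid W R chi_fork" and scott: "valid W R chi_scott"
    and "\<phi> \<in> PL n"
  shows "valid W R \<phi>"
  using \<open>\<phi> \<in> PL n\<close>
proof (induction rule: PL.induct)
  case (bd \<phi>) then show ?case using BD_valid[OF fin po height] by blast
qed (use valid_subst[OF po] valid_mp[OF po] fork scott in blast)+

section \<open>The Jankov--Fine lemma\<close>

definition upset_pmorphism ::
  "'w set \<Rightarrow> ('w \<Rightarrow> 'w \<Rightarrow> bool) \<Rightarrow> 'w \<Rightarrow> 'q set \<Rightarrow> ('q \<Rightarrow> 'q \<Rightarrow> bool) \<Rightarrow> ('w \<Rightarrow> 'q) \<Rightarrow> bool"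
where
  "upset_pmorphism W R w0 Q RQ f \<longleftrightarrow>
     (\<forall>y\<in>W. R w0 y \<longrightarrow> f y \<in> Q)
   \<and> (\<forall>y\<in>W. \<forall>z\<in>W. R w0 y \<longrightarrow> R y z \<longrightarrow> RQ (f y) (f z))
   \<and> (\<forall>y\<in>W. R w0 y \<longrightarrow> (\<forall>q\<in>Q. RQ (f y) q \<longrightarrow> (\<exists>z\<in>W. R y z \<and> f z = q)))"

lemma upset_pmorphismD:
  assumes "upset_pmorphism W R w0 Q RQ f" "y \<in> W" "R w0 y"
  shows "f y \<in> Q"
    and "z \<in> W \<Longrightarrow> R y z \<Longrightarrow> RQ (f y) (f z)"
    and "q \<in> Q \<Longrightarrow> RQ (f y) q \<Longrightarrow> \<exists>z\<in>W. R y z \<and> f z = q"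
  using assms unfolding upset_pmorphism_def by blast+

definition jankov_diagram :: "'q set \<Rightarrow> ('q \<Rightarrow> 'q \<Rightarrow> bool) \<Rightarrow> 'q set fm set" where
  "jankov_diagram Q RQ =
    (let A = {U. is_upset Q RQ U}
     in {Iff (Var (a \<inter> b)) (Conj (Var a) (Var b)) | a b. a \<in> A \<and> b \<in> A}
      \<union> {Iff (Var (a \<union> b)) (Disj (Var a) (Var b)) | a b. a \<in> A \<and> b \<in> A}
      \<union> {Iff (Var (up_imp Q RQ a b)) (Imp (Var a) (Var b)) | a b. a \<in> A \<and> b \<in> A}
      \<union> {Iff (Var (up_imp Q RQ a {})) (Neg (Var a)) | a. a \<in> A})"

definition heyting_hom_at ::
  "'w set \<Rightarrow> ('w \<Rightarrow> 'w \<Rightarrow> bool) \<Rightarrow> ('q set \<Rightarrow> 'w set) \<Rightarrow> 'q set \<Rightarrow> ('q \<Rightarrow> 'q \<Rightarrow> bool) \<Rightarrow> 'w \<Rightarrow> bool"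
where
  "heyting_hom_at W R V Q RQ y \<longleftrightarrow>
     (\<forall>a b. is_upset Q RQ a \<longrightarrow> is_upset Q RQ b \<longrightarrow>
        (y \<in> V (a \<inter> b) \<longleftrightarrow> y \<in> V a \<and> y \<in> V b)
      \<and> (y \<in> V (a \<union> b) \<longleftrightarrow> y \<in> V a \<or> y \<in> V b)
      \<and> (y \<in> V (up_imp Q RQ a b) \<longleftrightarrow> (\<forall>v\<in>W. R y v \<longrightarrow> v \<in> V a \<longrightarrow> v \<in> V b)))
   \<and> (\<forall>a. is_upset Q RQ a \<longrightarrow> (y \<in> V (up_imp Q RQ a {}) \<longleftrightarrow> (\<forall>v\<in>W. R y v \<longrightarrow> v \<notin> V a)))"

lemma jankov_eq: "jankov Q RQ r = Imp (ConjSet (jankov_diagram Q RQ)) (Var (Q - {r}))"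
  unfolding jankov_def jankov_diagram_def Let_def ..

lemma finite_jankov_diagram: "finite Q \<Longrightarrow> finite (jankov_diagram Q RQ)"
proof -
  assume "finite Q"
  moreover have "{U. is_upset Q RQ U} \<subseteq> Pow Q" unfolding is_upset_def by blast
  ultimately have "finite {U. is_upset Q RQ U}" by (simp add: finite_subset)
  then show ?thesis
    unfolding jankov_diagram_def Let_def
    by (intro finite_UnI finite_image_set2 finite_image_set) simp_all
qed

lemma forces_jankov_diagram_hom:
  assumes fin: "finite Q" and y: "y \<in> W" "R y y"
    and forced: "forces W R V y (ConjSet (jankov_diagram Q RQ))"
  shows "heyting_hom_at W R V Q RQ y"
proof -
  have iff: "forces W R V y \<phi> \<longleftrightarrow> forces W R V y \<psi>"
    if "Iff \<phi> \<psi> \<in> jankov_diagram Q RQ" for \<phi> \<psi>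
    using forced that y forces_Iff_refl[of R y W V \<phi> \<psi>]
    unfolding forces_ConjSet[OF finite_jankov_diagram[OF fin]] by blast
  show ?thesis
    unfolding heyting_hom_at_def
  proof (intro allI impI conjI)
    fix a b assume "is_upset Q RQ a" "is_upset Q RQ b"
    then have "Iff (Var (a \<inter> b)) (Conj (Var a) (Var b)) \<in> jankov_diagram Q RQ"
      and "Iff (Var (a \<union> b)) (Disj (Var a) (Var b)) \<in> jankov_diagram Q RQ"
      and "Iff (Var (up_imp Q RQ a b)) (Imp (Var a) (Var b)) \<in> jankov_diagram Q RQ"
      unfolding jankov_diagram_def Let_def by blast+
    from iff[OF this(1)] iff[OF this(2)] iff[OF this(3)]
    show "y \<in> V (a \<inter> b) \<longleftrightarrow> y \<in> V a \<and> y \<in> V b"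
      and "y \<in> V (a \<union> b) \<longleftrightarrow> y \<in> V a \<or> y \<in> V b"
      and "y \<in> V (up_imp Q RQ a b) \<longleftrightarrow> (\<forall>v\<in>W. R y v \<longrightarrow> v \<in> V a \<longrightarrow> v \<in> V b)"
      by simp_all
  next
    fix a assume "is_upset Q RQ a"
    then have "Iff (Var (up_imp Q RQ a {})) (Neg (Var a)) \<in> jankov_diagram Q RQ"
      unfolding jankov_diagram_def Let_def by blast
    from iff[OF this]
    show "y \<in> V (up_imp Q RQ a {}) \<longleftrightarrow> (\<forall>v\<in>W. R y v \<longrightarrow> v \<notin> V a)"
      by (simp add: Neg_def)
  qed
qed

lemma heyting_hom_atD:
  assumes "heyting_hom_at W R V Q RQ y" "is_upset Q RQ a" "is_upset Q RQ b"
  shows "y \<in> V (a \<inter> b) \<longleftrightarrow> y \<in> V a \<and> y \<in> V b"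
    and "y \<in> V (a \<union> b) \<longleftrightarrow> y \<in> V a \<or> y \<in> V b"
    and "y \<in> V (up_imp Q RQ a b) \<longleftrightarrow> (\<forall>v\<in>W. R y v \<longrightarrow> v \<in> V a \<longrightarrow> v \<in> V b)"
    and "y \<in> V (up_imp Q RQ a {}) \<longleftrightarrow> (\<forall>v\<in>W. R y v \<longrightarrow> v \<notin> V a)"
  using assms unfolding heyting_hom_at_def by blast+

lemma is_upset_carrier: "is_upset Q RQ Q"
  unfolding is_upset_def by blast

lemma is_upset_Int: "is_upset Q RQ a \<Longrightarrow> is_upset Q RQ b \<Longrightarrow> is_upset Q RQ (a \<inter> b)"
  unfolding is_upset_def by blast

lemma is_upset_principal:
  assumes "porder Q RQ" "q \<in> Q"
  shows "is_upset Q RQ {z\<in>Q. RQ q z}"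
  using porder_trans[OF assms(1) assms(2)] unfolding is_upset_def by blast

lemma is_upset_up_imp:
  assumes "porder Q RQ"
  shows "is_upset Q RQ (up_imp Q RQ a b)"
  using porder_trans[OF assms] unfolding is_upset_def up_imp_def by blast

lemma is_upset_not_below:
  assumes "porder Q RQ" "is_upset Q RQ m" "q \<in> Q"
  shows "is_upset Q RQ {z\<in>m. \<not> RQ z q}"
  using porder_trans[OF assms(1) _ _ assms(3)] assms(2) unfolding is_upset_def by blast

lemma heyting_hom_at_point:
  assumes po: "porder W R" and fin: "finite Q" and poQ: "porder Q RQ"
    and y: "y \<in> W" and hom: "heyting_hom_at W R V Q RQ y"
  shows "\<exists>q\<in>Q. \<forall>a. is_upset Q RQ a \<longrightarrow> (y \<in> V a \<longleftrightarrow> q \<in> a)"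
proof -
  have Q: "is_upset Q RQ Q" and empty: "is_upset Q RQ {}"
    by (rule is_upset_carrier) (simp add: is_upset_def)
  have "up_imp Q RQ {} {} = Q" unfolding up_imp_def by blast
  then have yQ: "y \<in> V Q" using heyting_hom_atD(3)[OF hom empty empty] by simp
  have "up_imp Q RQ Q {} = {}" unfolding up_imp_def using porder_refl[OF poQ] by blast
  then have "y \<notin> V {}" using heyting_hom_atD(4)[OF hom Q Q] yQ y porder_refl[OF po y] by auto
  \<comment> \<open>the smallest upset whose variable holds at y is a principal upset, generated by the point of y\<close>
  obtain m where m: "is_upset Q RQ m" "y \<in> V m"
    and least: "\<And>a. is_upset Q RQ a \<Longrightarrow> y \<in> V a \<Longrightarrow> card m \<le> card a"
    using ex_has_least_nat[of "\<lambda>a. is_upset Q RQ a \<and> y \<in> V a" Q card] Q yQ by blast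
  have mQ: "m \<subseteq> Q" and fin_m: "finite m"
    using m(1) fin finite_subset unfolding is_upset_def by auto
  obtain q where q: "q \<in> m" and q_min: "\<forall>z\<in>m. RQ z q \<longrightarrow> z = q"
    using porder_has_minimal[OF porder_subset[OF poQ mQ] fin_m] m(2) \<open>y \<notin> V {}\<close>
    by (metis equals0I)
  have qQ: "q \<in> Q" using q mQ by blast
  let ?up = "{z\<in>Q. RQ q z}" and ?rest = "{z\<in>m. \<not> RQ z q}"
  have up: "is_upset Q RQ ?up" and rest: "is_upset Q RQ ?rest"
    using is_upset_principal[OF poQ qQ] is_upset_not_below[OF poQ m(1) qQ] .
  have "m = ?up \<union> ?rest"
    using m(1) q q_min porder_refl[OF poQ qQ] unfolding is_upset_def by blast
  moreover have "y \<notin> V ?rest"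
  proof
    assume "y \<in> V ?rest"
    moreover have "card ?rest < card m"
      using q porder_refl[OF poQ qQ] fin_m by (intro psubset_card_mono) auto
    ultimately show False using least[OF rest] by simp
  qed
  ultimately have y_up: "y \<in> V ?up" using heyting_hom_atD(2)[OF hom up rest] m(2) by simp
  have "y \<in> V a \<longleftrightarrow> q \<in> a" if a: "is_upset Q RQ a" for a
  proof
    assume "y \<in> V a"
    then have "y \<in> V (a \<inter> m)" using heyting_hom_atD(1)[OF hom a m(1)] m(2) by simp
    then have "card m \<le> card (a \<inter> m)" using least is_upset_Int[OF a m(1)] by blast
    then have "a \<inter> m = m" using fin_m by (meson card_seteq inf_le2)
    then show "q \<in> a" using q by blast
  next
    assume "q \<in> a"
    then have "a \<union> ?up = a" using a unfolding is_upset_def by blast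
    then show "y \<in> V a" using heyting_hom_atD(2)[OF hom a up] y_up by simp
  qed
  then show ?thesis using qQ by blast
qed

lemma heyting_hom_pmorphism:
  assumes po: "porder W R" and fin: "finite Q" and poQ: "porder Q RQ"
    and up: "\<forall>p. is_upset W R (V p)" and w0: "w0 \<in> W"
    and hom: "\<forall>y\<in>W. R w0 y \<longrightarrow> heyting_hom_at W R V Q RQ y"
  obtains f where "upset_pmorphism W R w0 Q RQ f"
    and "\<forall>y\<in>W. R w0 y \<longrightarrow> (\<forall>a. is_upset Q RQ a \<longrightarrow> (y \<in> V a \<longleftrightarrow> f y \<in> a))"
proof -
  define f where "f y = (SOME q. q \<in> Q \<and> (\<forall>a. is_upset Q RQ a \<longrightarrow> (y \<in> V a \<longleftrightarrow> q \<in> a)))" for y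
  have f: "f y \<in> Q" "\<And>a. is_upset Q RQ a \<Longrightarrow> y \<in> V a \<longleftrightarrow> f y \<in> a"
    if "y \<in> W" "R w0 y" for y
    using someI_ex[OF heyting_hom_at_point[OF po fin poQ that(1) hom[rule_format, OF that],
          unfolded Bex_def]]
    unfolding f_def by blast+
  have mono: "RQ (f y) (f z)" if y: "y \<in> W" "R w0 y" and z: "z \<in> W" "R y z" for y z
  proof -
    have z0: "R w0 z" using porder_trans[OF po w0 y(1) z(1) y(2) z(2)] .
    have principal: "is_upset Q RQ {q\<in>Q. RQ (f y) q}"
      using is_upset_principal[OF poQ f(1)[OF y]] .
    then have "y \<in> V {q\<in>Q. RQ (f y) q}"
      using f[OF y] porder_refl[OF poQ f(1)[OF y]] by blast
    then have "z \<in> V {q\<in>Q. RQ (f y) q}" using up y z unfolding is_upset_def by blast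
    then show ?thesis using f(2)[OF z(1) z0 principal] by blast
  qed
  have lift: "\<exists>z\<in>W. R y z \<and> f z = q"
    if y: "y \<in> W" "R w0 y" and q: "q \<in> Q" "RQ (f y) q" for y q
  proof -
    let ?a = "{z\<in>Q. RQ q z}"
    let ?b = "{z\<in>?a. \<not> RQ z q}"
    have a: "is_upset Q RQ ?a" and b: "is_upset Q RQ ?b"
      using is_upset_principal[OF poQ q(1)] is_upset_not_below[OF poQ _ q(1)] by blast+
    have "f y \<notin> up_imp Q RQ ?a ?b"
      using q porder_refl[OF poQ q(1)] unfolding up_imp_def by blast
    then have "y \<notin> V (up_imp Q RQ ?a ?b)" using f(2)[OF y is_upset_up_imp[OF poQ]] by blast
    then obtain v where v: "v \<in> W" "R y v" "v \<in> V ?a" "v \<notin> V ?b"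
      using heyting_hom_atD(3)[OF hom[rule_format, OF y] a b] by blast
    have "R w0 v" using porder_trans[OF po w0 y(1) v(1) y(2) v(2)] .
    then have "f v \<in> ?a" "f v \<notin> ?b" using f(2)[OF v(1)] a b v(3,4) by blast+
    then have "f v = q" using porder_antisym[OF poQ q(1) f(1)[OF v(1) \<open>R w0 v\<close>]] by blast
    then show ?thesis using v by blast
  qed
  have "upset_pmorphism W R w0 Q RQ f"
    unfolding upset_pmorphism_def by (intro conjI ballI impI) (blast intro: f(1) mono lift)+
  then show thesis using that f(2) by blast
qed

lemma jankov_refuted_pmorphism:
  assumes po: "porder W R" and fin: "finite Q" and poQ: "porder Q RQ"
    and r: "r \<in> Q" "\<forall>q\<in>Q. RQ r q"
    and up: "\<forall>p. is_upset W R (V p)" and w: "w \<in> W"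
    and refuted: "\<not> forces W R V w (jankov Q RQ r)"
  shows "\<exists>w0\<in>W. \<exists>f. f w0 = r \<and> upset_pmorphism W R w0 Q RQ f"
proof -
  obtain w0 where w0: "w0 \<in> W" "R w w0"
    and diagram: "forces W R V w0 (ConjSet (jankov_diagram Q RQ))"
    and not_top: "w0 \<notin> V (Q - {r})"
    using refuted unfolding jankov_eq by auto
  have "heyting_hom_at W R V Q RQ y" if "y \<in> W" "R w0 y" for y
    using forces_jankov_diagram_hom[where R=R, OF fin that(1) porder_refl[OF po that(1)]]
      forces_mono[OF po up w0(1) that] diagram by blast
  then obtain f where pm: "upset_pmorphism W R w0 Q RQ f"
    and f: "\<forall>y\<in>W. R w0 y \<longrightarrow> (\<forall>a. is_upset Q RQ a \<longrightarrow> (y \<in> V a \<longleftrightarrow> f y \<in> a))"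
    using heyting_hom_pmorphism[OF po fin poQ up w0(1)] by blast
  have "Q - {r} = {q\<in>Q. \<not> RQ q r}"
    using r porder_antisym[OF poQ _ r(1)] porder_refl[OF poQ r(1)] by blast
  then have "is_upset Q RQ (Q - {r})"
    using is_upset_not_below[OF poQ is_upset_carrier r(1)] by simp
  then have "f w0 \<notin> Q - {r}"
    using f not_top w0(1) porder_refl[OF po w0(1)] by blast
  moreover have "f w0 \<in> Q" using upset_pmorphismD(1)[OF pm w0(1) porder_refl[OF po w0(1)]] .
  ultimately have "f w0 = r" by blast
  then show ?thesis using pm w0(1) by blast
qed

lemma valid_jankov:
  fixes W :: "'w set" and Q :: "'q set"
  assumes po: "porder W R" and fin: "finite Q" and poQ: "porder Q RQ"
    and r: "r \<in> Q" "\<forall>q\<in>Q. RQ r q"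
    and no_pmorphism: "\<And>w0 f. w0 \<in> W \<Longrightarrow> f w0 = r \<Longrightarrow> \<not> upset_pmorphism W R w0 Q RQ f"
  shows "valid W R (jankov Q RQ r)"
  unfolding valid_def
proof (intro allI impI ballI)
  fix V :: "'q set \<Rightarrow> 'w set" and w assume "\<forall>p. is_upset W R (V p)" "w \<in> W"
  with jankov_refuted_pmorphism[OF po fin poQ r this] no_pmorphism
  show "forces W R V w (jankov Q RQ r)" by blast
qed

section \<open>Sawed trees admit no p-morphism onto the 3-fork or the Scott frame\<close>

lemma upset_pmorphism_onto:
  assumes "upset_pmorphism W R w0 Q RQ f" "w0 \<in> W" "R w0 w0" "f w0 = r" "\<forall>q\<in>Q. RQ r q" "q \<in> Q"
  shows "\<exists>z\<in>W. R w0 z \<and> f z = q"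
  using upset_pmorphismD(3)[OF assms(1-3) assms(6)] assms(4-6) by simp

lemma upset_pmorphism_root_preimage:
  assumes po: "porder W R" and pm: "upset_pmorphism W R w0 Q RQ f" and w0: "w0 \<in> W"
    and root: "\<forall>q\<in>Q. RQ r q" and y: "y \<in> W" "R w0 y" "f y = r"
    and succ: "\<forall>z\<in>W. R y z \<longrightarrow> z \<noteq> y \<longrightarrow> z \<in> {a, b} \<inter> Top_el W R"
  shows "Q - {r} \<subseteq> {f a, f b} \<inter> Top_el Q RQ"
proof
  fix q assume q: "q \<in> Q - {r}"
  then obtain z where z: "z \<in> W" "R y z" "f z = q"
    using upset_pmorphismD(3)[OF pm y(1,2)] y(3) root by auto
  then have z_top: "z \<in> {a, b} \<inter> Top_el W R" using succ q y(3) by auto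
  have z0: "R w0 z" using porder_trans[OF po w0 y(1) z(1) y(2) z(2)] .
  have "q' = q" if q': "q' \<in> Q" "RQ q q'" for q'
  proof -
    obtain u where "u \<in> W" "R z u" "f u = q'"
      using upset_pmorphismD(3)[OF pm z(1) z0] q' z(3) by blast
    then show ?thesis using z_top z(3) unfolding Top_el_def by blast
  qed
  then show "q \<in> {f a, f b} \<inter> Top_el Q RQ"
    using q z(3) z_top unfolding Top_el_def by blast
qed

lemma constant_on_convex_nat:
  fixes g :: "nat \<Rightarrow> 'c"
  assumes convex: "\<And>i j l. i \<in> J \<Longrightarrow> l \<in> J \<Longrightarrow> i \<le> j \<Longrightarrow> j \<le> l \<Longrightarrow> j \<in> J"
    and step: "\<And>j. j \<in> J \<Longrightarrow> Suc j \<in> J \<Longrightarrow> g (Suc j) = g j"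
    and "i \<in> J" "l \<in> J"
  shows "g i = g l"
proof -
  have "g l = g i" if "i \<in> J" "l \<in> J" "i \<le> l" for i l
    using \<open>i \<le> l\<close> \<open>l \<in> J\<close>
  proof (induction l rule: dec_induct)
    case (step n)
    then have "n \<in> J" using convex[OF \<open>i \<in> J\<close>] by simp
    then show ?case using step by (simp add: assms(2))
  qed simp
  then show ?thesis using assms(3,4) by (metis nat_le_linear)
qed

definition branch_colouring :: "'q set \<Rightarrow> ('q \<Rightarrow> 'q \<Rightarrow> bool) \<Rightarrow> 'q \<Rightarrow> ('q \<Rightarrow> 'c) \<Rightarrow> bool" where
  "branch_colouring Q RQ r cl \<longleftrightarrow>
     (\<forall>q\<in>Q. \<forall>q'\<in>Q. q \<noteq> r \<longrightarrow> RQ q q' \<longrightarrow> cl q' = cl q)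
   \<and> (\<exists>a\<in>Q. \<exists>b\<in>Q. a \<noteq> r \<and> b \<noteq> r \<and> cl a \<noteq> cl b)"

lemma saw_le_Inr_iff [simp]: "saw_le R t (Inr i) z \<longleftrightarrow> z = Inr i"
  by (cases z) auto

lemma saw_W_simps [simp]:
  "Inl x \<in> saw_W W k \<longleftrightarrow> x \<in> W" "Inr i \<in> saw_W W k \<longleftrightarrow> 1 \<le> i \<and> i < k"
  unfolding saw_W_def by auto

locale sawed_tree =
  fixes W :: "'a set" and R :: "'a \<Rightarrow> 'a \<Rightarrow> bool" and prec :: "'a \<Rightarrow> 'a \<Rightarrow> bool"
    and t :: "nat \<Rightarrow> 'a" and k :: nat
  assumes finite_W: "finite W" and porder_W: "porder W R" and plane: "plane_order W R prec"
    and enum: "bij_betw t {1..k} (Top_el W R)"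
    and enum_mono: "\<forall>i j. 1 \<le> i \<and> i < j \<and> j \<le> k \<longrightarrow> prec (t i) (t j)"
begin

abbreviation S where "S \<equiv> saw_W W k"
abbreviation L where "L \<equiv> saw_le R t"

lemma t_Top: "j \<in> {1..k} \<Longrightarrow> t j \<in> Top_el W R"
  using bij_betw_apply[OF enum] .

lemma t_in_W: "j \<in> {1..k} \<Longrightarrow> t j \<in> W"
  using t_Top unfolding Top_el_def by blast

lemma t_eq_iff: "i \<in> {1..k} \<Longrightarrow> j \<in> {1..k} \<Longrightarrow> t i = t j \<longleftrightarrow> i = j"
  by (rule inj_on_eq_iff[OF bij_betw_imp_inj_on[OF enum]])

lemma ex_top_above:
  assumes "y \<in> W"
  obtains j where "j \<in> {1..k}" "R y (t j)"
proof -
  obtain m where m: "m \<in> Top_el W R" "R y m"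
    using finite_porder_ex_Top_el[OF finite_W porder_W assms] by blast
  moreover have "Top_el W R = t ` {1..k}" using enum unfolding bij_betw_def by simp
  ultimately obtain j where "j \<in> {1..k}" "m = t j" by auto
  then show thesis using that m(2) by simp
qed

lemma finite_saw_W: "finite S"
  using finite_W unfolding saw_W_def by simp

lemma saw_le_trans:
  assumes xyz: "x \<in> S" "y \<in> S" "z \<in> S" "L x y" "L y z"
  shows "L x z"
proof (cases y)
  case (Inr i)
  then show ?thesis using xyz by simp
next
  case (Inl b)
  then obtain a where a: "x = Inl a" "a \<in> W" "R a b" using xyz by (cases x) auto
  have b: "b \<in> W" using Inl xyz by simp
  have trans: "R a c" if "c \<in> W" "R b c" for c
    using porder_trans[OF porder_W a(2) b that(1) a(3) that(2)] .
  show ?thesis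
  proof (cases z)
    case (Inl c)
    then show ?thesis using a(1) trans xyz \<open>y = Inl b\<close> by simp
  next
    case (Inr i)
    then have "i \<in> {1..k}" "Suc i \<in> {1..k}" "R b (t i) \<or> R b (t (Suc i))"
      using xyz \<open>y = Inl b\<close> by auto
    then show ?thesis using a(1) Inr trans t_in_W by auto
  qed
qed

lemma saw_porder: "porder S L"
  unfolding porder_def
proof (intro conjI ballI impI)
  fix x assume "x \<in> S"
  then show "L x x" by (cases x) (auto intro: porder_refl[OF porder_W])
next
  fix x y assume xy: "x \<in> S" "y \<in> S" "L x y \<and> L y x"
  show "x = y"
  proof (cases x)
    case (Inl a)
    show ?thesis
    proof (cases y)
      case (Inl b)
      then show ?thesis using xy \<open>x = Inl a\<close> porder_antisym[OF porder_W, of a b] by simp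
    qed (use xy in simp)
  qed (use xy in simp)
next
  fix x y z assume "x \<in> S" "y \<in> S" "z \<in> S" "L x y \<and> L y z"
  then show "L x z" using saw_le_trans by blast
qed

lemma Inr_Top_el: "Inr i \<in> S \<Longrightarrow> Inr i \<in> Top_el S L"
  unfolding Top_el_def by simp

lemma up_top:
  assumes j: "j \<in> {1..k}" and z: "z \<in> S" "L (Inl (t j)) z" "z \<noteq> Inl (t j)"
  shows "z \<in> {Inr (j - 1), Inr j} \<inter> Top_el S L"
proof (cases z)
  case (Inl y)
  then have "y \<in> W" "R (t j) y" using z by auto
  then have "y = t j" using t_Top[OF j] unfolding Top_el_def by blast
  then show ?thesis using Inl z(3) by simp
next
  case (Inr i)
  then have i: "i \<in> {1..k}" "Suc i \<in> {1..k}" and "R (t j) (t i) \<or> R (t j) (t (Suc i))"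
    using z by auto
  then have "t i = t j \<or> t (Suc i) = t j"
    using t_Top[OF j] t_in_W[OF i(1)] t_in_W[OF i(2)] unfolding Top_el_def by blast
  then have "i = j \<or> Suc i = j" using t_eq_iff[OF i(1) j] t_eq_iff[OF i(2) j] by blast
  then show ?thesis using Inr Inr_Top_el z(1) by auto
qed

lemma tops_interval:
  assumes "x \<in> W" "i \<in> {1..k}" "l \<in> {1..k}" "i \<le> j" "j \<le> l" "R x (t i)" "R x (t l)"
  shows "R x (t j)"
proof -
  have "j \<in> {1..k}" using assms(2-5) by auto
  show ?thesis
  proof (cases "j = i \<or> j = l")
    case False
    then have "prec (t i) (t j)" "prec (t j) (t l)"
      using enum_mono assms(2-5) by auto
    moreover have "\<forall>a\<in>Top_el W R. \<forall>b\<in>Top_el W R. \<forall>c\<in>Top_el W R.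
        prec a b \<and> prec b c \<and> R x a \<and> R x c \<longrightarrow> R x b"
      using plane assms(1) unfolding plane_order_def by blast
    ultimately show ?thesis
      using assms(2,3,6,7) t_Top \<open>j \<in> {1..k}\<close> by blast
  qed (use assms in auto)
qed

lemma comparable_top_above:
  assumes x: "x \<in> W" and y: "y \<in> S" "L (Inl x) y"
  shows "\<exists>j\<in>{1..k}. R x (t j) \<and> (L y (Inl (t j)) \<or> L (Inl (t j)) y)"
proof (cases y)
  case (Inl y')
  then have y': "y' \<in> W" "R x y'" using y by auto
  obtain j where j: "j \<in> {1..k}" "R y' (t j)" using ex_top_above[OF y'(1)] .
  then have "R x (t j)" using porder_trans[OF porder_W x y'(1) t_in_W[OF j(1)] y'(2)] by blast
  then show ?thesis using Inl j by auto
next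
  case (Inr i)
  then have "i \<in> {1..k}" "Suc i \<in> {1..k}" "R x (t i) \<or> R x (t (Suc i))"
    using y by auto
  moreover have "L (Inl (t i)) y" "L (Inl (t (Suc i))) y"
    using Inr porder_refl[OF porder_W t_in_W] \<open>i \<in> {1..k}\<close> \<open>Suc i \<in> {1..k}\<close> by auto
  ultimately show ?thesis by blast
qed

end

lemma fork3_rooted_poset:
  "finite fork3_W" "porder fork3_W fork3_le" "0 \<in> fork3_W" "\<forall>q\<in>fork3_W. fork3_le 0 q"
  by (auto simp: fork3_W_def fork3_le_def porder_def)

lemma scott_rooted_poset:
  "finite scott_W" "porder scott_W scott_le" "0 \<in> scott_W" "\<forall>q\<in>scott_W. scott_le 0 q"
  by (auto simp: scott_W_def scott_le_def porder_def)

context sawed_tree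
begin

context
  fixes Q :: "'q set" and RQ :: "'q \<Rightarrow> 'q \<Rightarrow> bool" and r :: 'q
    and f :: "'a + nat \<Rightarrow> 'q" and x :: 'a
  assumes pm: "upset_pmorphism S L (Inl x) Q RQ f" and x: "x \<in> W" and root: "\<forall>q\<in>Q. RQ r q"
begin

lemma top_not_root:
  assumes not_two_fork: "\<nexists>a b. Q - {r} \<subseteq> {a, b} \<inter> Top_el Q RQ"
    and j: "j \<in> {1..k}" "R x (t j)"
  shows "f (Inl (t j)) \<noteq> r"
proof
  assume "f (Inl (t j)) = r"
  moreover have "\<forall>z\<in>S. L (Inl (t j)) z \<longrightarrow> z \<noteq> Inl (t j) \<longrightarrow> z \<in> {Inr (j - 1), Inr j} \<inter> Top_el S L"
    using up_top[OF j(1)] by blast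
  moreover have "Inl x \<in> S" "Inl (t j) \<in> S" "L (Inl x) (Inl (t j))" using x j t_in_W by auto
  ultimately have "Q - {r} \<subseteq> {f (Inr (j - 1)), f (Inr j)} \<inter> Top_el Q RQ"
    using upset_pmorphism_root_preimage[OF saw_porder pm _ root] by blast
  then show False using not_two_fork by blast
qed

lemma colour_above_top:
  assumes colour: "branch_colouring Q RQ r cl"
    and j: "j \<in> {1..k}" "R x (t j)" "f (Inl (t j)) \<noteq> r"
    and z: "z \<in> S" "L (Inl (t j)) z"
  shows "cl (f z) = cl (f (Inl (t j)))"
proof -
  have top: "Inl (t j) \<in> S" "L (Inl x) (Inl (t j))" using j t_in_W by auto
  have "L (Inl x) z" using saw_le_trans[OF _ top(1) z(1) top(2) z(2)] x by simp
  then have "f z \<in> Q" "f (Inl (t j)) \<in> Q" "RQ (f (Inl (t j))) (f z)"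
    using upset_pmorphismD[OF pm] z top by blast+
  then show ?thesis using colour j(3) unfolding branch_colouring_def by blast
qed

lemma colour_via_top:
  assumes colour: "branch_colouring Q RQ r cl"
    and not_two_fork: "\<nexists>a b. Q - {r} \<subseteq> {a, b} \<inter> Top_el Q RQ"
    and y: "y \<in> S" "L (Inl x) y" "f y \<noteq> r"
  obtains j where "j \<in> {1..k}" "R x (t j)" "cl (f y) = cl (f (Inl (t j)))"
proof -
  obtain j where j: "j \<in> {1..k}" "R x (t j)" "L y (Inl (t j)) \<or> L (Inl (t j)) y"
    using comparable_top_above[OF x y(1,2)] by blast
  have top: "Inl (t j) \<in> S" using j(1) t_in_W by simp
  have "cl (f y) = cl (f (Inl (t j)))"
  proof (cases "L y (Inl (t j))")
    case True
    then have "f y \<in> Q" "f (Inl (t j)) \<in> Q" "RQ (f y) (f (Inl (t j)))"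
      using upset_pmorphismD[OF pm y(1,2)] upset_pmorphismD(1)[OF pm top] top j(2) by auto
    then show ?thesis using colour y(3) unfolding branch_colouring_def by metis
  next
    case False
    then show ?thesis
      using colour_above_top[OF colour j(1,2) top_not_root[OF not_two_fork j(1,2)] y(1)] j(3)
      by simp
  qed
  then show thesis using that j(1,2) by blast
qed

lemma saw_monochromatic:
  assumes colour: "branch_colouring Q RQ r cl"
    and not_two_fork: "\<nexists>a b. Q - {r} \<subseteq> {a, b} \<inter> Top_el Q RQ"
  obtains C where "\<And>y. y \<in> S \<Longrightarrow> L (Inl x) y \<Longrightarrow> f y \<noteq> r \<Longrightarrow> cl (f y) = C"
proof -
  define J where "J = {j\<in>{1..k}. R x (t j)}"
  have nonroot: "f (Inl (t j)) \<noteq> r" if "j \<in> J" for j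
    using top_not_root[OF not_two_fork] that unfolding J_def by blast
  \<comment> \<open>neighbouring tops share the saw point between them\<close>
  have "cl (f (Inl (t (Suc j)))) = cl (f (Inl (t j)))" if "j \<in> J" "Suc j \<in> J" for j
  proof -
    have j: "j \<in> {1..k}" "R x (t j)" and sj: "Suc j \<in> {1..k}" "R x (t (Suc j))"
      using that unfolding J_def by auto
    then have saw: "Inr j \<in> S" "L (Inl (t j)) (Inr j)" "L (Inl (t (Suc j))) (Inr j)"
      using t_in_W porder_refl[OF porder_W] by auto
    show ?thesis
      using colour_above_top[OF colour j nonroot[OF that(1)] saw(1,2)]
        colour_above_top[OF colour sj nonroot[OF that(2)] saw(1,3)] by simp
  qed
  moreover have "j \<in> J" if "i \<in> J" "l \<in> J" "i \<le> j" "j \<le> l" for i j l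
    using tops_interval[OF x, of i l j] that unfolding J_def by auto
  ultimately have same: "cl (f (Inl (t i))) = cl (f (Inl (t j)))" if "i \<in> J" "j \<in> J" for i j
    using constant_on_convex_nat[of J "\<lambda>j. cl (f (Inl (t j)))"] that by blast
  obtain j0 where "j0 \<in> {1..k}" "R x (t j0)" using ex_top_above[OF x] .
  then have "j0 \<in> J" unfolding J_def by blast
  have "cl (f y) = cl (f (Inl (t j0)))" if "y \<in> S" "L (Inl x) y" "f y \<noteq> r" for y
    using colour_via_top[OF colour not_two_fork that] same[OF _ \<open>j0 \<in> J\<close>]
    unfolding J_def by (metis (no_types, lifting) mem_Collect_eq)
  then show thesis using that by blast
qed
end

lemma saw_no_upset_pmorphism:
  assumes root: "\<forall>q\<in>Q. RQ r q" and colour: "branch_colouring Q RQ r cl"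
    and not_two_fork: "\<nexists>a b. Q - {r} \<subseteq> {a, b} \<inter> Top_el Q RQ"
    and w0: "w0 \<in> S" "f w0 = r"
  shows "\<not> upset_pmorphism S L w0 Q RQ f"
proof
  assume pm: "upset_pmorphism S L w0 Q RQ f"
  have lift: "\<exists>y\<in>S. L w0 y \<and> f y = q" if "q \<in> Q" for q
    using upset_pmorphism_onto[OF pm w0(1) porder_refl[OF saw_porder w0(1)] w0(2) root that] .
  obtain a b where ab: "a \<in> Q" "b \<in> Q" "a \<noteq> r" "b \<noteq> r" "cl a \<noteq> cl b"
    using colour unfolding branch_colouring_def by blast
  obtain x where x: "w0 = Inl x" "x \<in> W"
  proof (cases w0)
    case (Inr i)
    then show thesis using lift[OF ab(1)] ab(3) w0(2) by auto
  qed (use w0 in simp)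
  obtain C where C: "\<And>y. y \<in> S \<Longrightarrow> L w0 y \<Longrightarrow> f y \<noteq> r \<Longrightarrow> cl (f y) = C"
    using saw_monochromatic[OF pm[unfolded x(1)] x(2) root colour not_two_fork] x(1) by blast
  show False using lift[OF ab(1)] lift[OF ab(2)] C ab(3-5) by metis
qed

lemma valid_jankov_saw:
  assumes "finite Q" "porder Q RQ" "r \<in> Q" "\<forall>q\<in>Q. RQ r q"
    and "branch_colouring Q RQ r cl" and "\<nexists>a b. Q - {r} \<subseteq> {a, b} \<inter> Top_el Q RQ"
  shows "valid S L (jankov Q RQ r)"
  by (rule valid_jankov[OF saw_porder assms(1-4) saw_no_upset_pmorphism[OF assms(4-6)]])

lemma valid_chi_fork: "valid S L chi_fork"
proof -
  have "fork3_W - {0} = {1, 2, 3}" by (auto simp: fork3_W_def)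
  moreover have "\<not> {1, 2, 3::nat} \<subseteq> {a, b}" for a b by auto
  ultimately have "\<nexists>a b. fork3_W - {0} \<subseteq> {a, b} \<inter> Top_el fork3_W fork3_le" by blast
  moreover have "branch_colouring fork3_W fork3_le 0 id"
    unfolding branch_colouring_def fork3_W_def fork3_le_def by auto
  ultimately show ?thesis
    unfolding chi_fork_def by (rule valid_jankov_saw[OF fork3_rooted_poset, rotated])
qed

lemma valid_chi_scott: "valid S L chi_scott"
proof -
  have "(1::nat) \<in> scott_W - {0}" "1 \<notin> Top_el scott_W scott_le"
    unfolding Top_el_def scott_W_def scott_le_def by auto
  then have "\<nexists>a b. scott_W - {0} \<subseteq> {a, b} \<inter> Top_el scott_W scott_le" by blast
  moreover have "branch_colouring scott_W scott_le 0 (\<lambda>q. q = 3)"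
    unfolding branch_colouring_def scott_W_def scott_le_def by auto
  ultimately show ?thesis
    unfolding chi_scott_def by (rule valid_jankov_saw[OF scott_rooted_poset, rotated])
qed

end

theorem lemma7p7:
  fixes W :: "'a set" and R :: "'a \<Rightarrow> 'a \<Rightarrow> bool" and prec :: "'a \<Rightarrow> 'a \<Rightarrow> bool"
    and t :: "nat \<Rightarrow> 'a" and k n :: nat
  assumes tree: "is_tree W R"
    and pos_height: "\<not> height_le W R 0"
    and same_height: "\<forall>x\<in>Top_el W R. \<forall>y\<in>Top_el W R. card (down W R x) = card (down W R y)"
    and plane: "plane_order W R prec"
    and k_def: "k = card (Top_el W R)"
    and enum: "bij_betw t {1..k} (Top_el W R)"
    and enum_mono: "\<forall>i j. 1 \<le> i \<and> i < j \<and> j \<le> k \<longrightarrow> prec (t i) (t j)"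
    and height: "has_height (saw_W W k) (saw_le R t) n"
  shows "\<forall>\<phi>\<in>PL n. valid (saw_W W k) (saw_le R t) \<phi>"
proof -
  \<comment> \<open>positive height, equal heights of the tops and the value of k are not needed:
      the argument works for any finite poset with a plane enumeration of its maximal points\<close>
  interpret sawed_tree W R prec t k
    using tree plane enum enum_mono unfolding is_tree_def by unfold_locales auto
  show ?thesis
    using PL_valid[OF finite_saw_W saw_porder _ valid_chi_fork valid_chi_scott] height
    unfolding has_height_def by blast
qed

end
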